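(* Let $m,\ell\ge1$ be integers, set $n=m\ell$, and let $1\le s\le\ell$. The number of $(m+2)$-angulations of the once-punctured polygon $P_n^\bullet$ with exactly $s$ spokes is $m\binom{n+\ell-s-1}{n-1}$.
   Context: $P_n^\bullet$ is a disc with $n$ marked points $v_0,\ldots,v_{n-1}$ on its boundary (in clockwise order, indices mod $n$) and one marked point $\bullet$ (the puncture) in its interior. An arc is a non-self-intersecting curve in the disc whose endpoints are marked points and whose interior avoids the marked points, considered up to isotopy, and not isotopic to a boundary segment or contractible. Two arcs are non-crossing if they have non-crossing representatives in their isotopy classes. A spoke is an arc with an endpoint at $\bullet$. For $m\ge1$, an $(m+2)$-angulation of $P_n^\bullet$ is a set $T$ of pairwise non-crossing arcs such that every connected component of $P_n^\bullet\setminus T$ is an $(m+2)$-gon (sides counted with multiplicity, so e.g. a self-folded triangle counts as a triangle). *)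

theory Defs
  imports Main
begin

text \<open>Combinatorial model of arcs in the once-punctured polygon with n boundary
marked points v_0..v_(n-1) (clockwise, indices mod n) and one puncture.
  Spoke i   : the arc from v_i to the puncture (0 <= i < n).
  Chord i k : the arc from v_i to v_(i+k mod n) such that the component of the
              complement NOT containing the puncture has on its boundary the
              boundary segments from v_i clockwise to v_(i+k); 2 <= k <= n
              (k = 1 would be a boundary segment, k = n is the loop at v_i
              around the puncture).\<close>

datatype parc = Spoke nat | Chord nat nat

definition arcs :: "nat \<Rightarrow> parc set" where
  "arcs n = {Spoke i | i. i < n} \<union> {Chord i k | i k. i < n \<and> 2 \<le> k \<and> k \<le> n}"

text \<open>Lifts to the universal cover of the disc minus the puncture: the boundary
lifts to the integer line (v_i lifts to all i + t n), a chord lifts to the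
intervals [a, a+k], a spoke lifts to vertical rays at i + t n.\<close>

definition lift_chords :: "nat \<Rightarrow> parc set \<Rightarrow> (int \<times> int) set" where
  "lift_chords n T = {(int i + t * int n, int i + t * int n + int k) | i k t. Chord i k \<in> T}"

definition lift_rays :: "nat \<Rightarrow> parc set \<Rightarrow> int set" where
  "lift_rays n T = {int i + t * int n | i t. Spoke i \<in> T}"

definition noncrossing :: "nat \<Rightarrow> parc set \<Rightarrow> bool" where
  "noncrossing n T \<longleftrightarrow>
     (\<forall>(a, b) \<in> lift_chords n T. \<forall>(c, d) \<in> lift_chords n T. \<not> (a < c \<and> c < b \<and> b < d)) \<and>
     (\<forall>(a, b) \<in> lift_chords n T. \<forall>r \<in> lift_rays n T. \<not> (a < r \<and> r < b))"

text \<open>Number of sides of the part of a face lying along the boundary interval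
[x, y]: the maximal chords of C inside [x, y] plus the unit boundary segments
of [x, y] not covered by any chord of C inside [x, y].\<close>

definition within :: "(int \<times> int) set \<Rightarrow> int \<Rightarrow> int \<Rightarrow> (int \<times> int) set" where
  "within C x y = {(c, d) \<in> C. x \<le> c \<and> d \<le> y}"

definition pieces :: "(int \<times> int) set \<Rightarrow> int \<Rightarrow> int \<Rightarrow> nat" where
  "pieces C x y =
     card {(c, d) \<in> within C x y. \<not> (\<exists>(c', d') \<in> within C x y. (c', d') \<noteq> (c, d) \<and> c' \<le> c \<and> d \<le> d')}
   + card {t. x \<le> t \<and> t + 1 \<le> y \<and> \<not> (\<exists>(c, d) \<in> within C x y. c \<le> t \<and> t + 1 \<le> d)}"

text \<open>When T contains a spoke, every face lifts homeomorphically;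
a face is either directly below a lifted chord (a,b) (sides: the chord itself plus
the pieces of [a,b]) or lies between two consecutive lifted rays r < r' (sides:
the two rays plus the pieces of [r,r']). Without spokes the face containing the
puncture is not a polygon, so such T are not (m+2)-angulations.\<close>

definition is_angulation :: "nat \<Rightarrow> nat \<Rightarrow> parc set \<Rightarrow> bool" where
  "is_angulation m n T \<longleftrightarrow>
     T \<subseteq> arcs n \<and> noncrossing n T \<and> lift_rays n T \<noteq> {} \<and>
     (\<forall>(a, b) \<in> lift_chords n T. 1 + pieces (lift_chords n T - {(a, b)}) a b = m + 2) \<and>
     (\<forall>r \<in> lift_rays n T. \<forall>r' \<in> lift_rays n T.
        r < r' \<and> \<not> (\<exists>r'' \<in> lift_rays n T. r < r'' \<and> r'' < r') \<longrightarrow>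
        2 + pieces (lift_chords n T) r r' = m + 2)"

definition num_spokes :: "parc set \<Rightarrow> nat" where
  "num_spokes T = card {i. Spoke i \<in> T}"

end

theory Submission
  imports Defs
begin

(* Lift the punctured polygon to its universal cover: the boundary becomes the integer line,
   the chords of T become an n-periodic laminar family of intervals and the spokes an n-periodic
   set of points. Let A u be the number of chords starting at u and W the walk with increments
   m A u - 1. Counting sides, T is an (m+2)-angulation iff every chord (a, b) has m times the
   number of chords nested in it equal to b - a - 1, and W drops by exactly m between
   consecutive spokes. Then the chords from c end at the first points after c where W reaches
   the levels W c + m k - 1 (k < A c), and the spokes are the strict prefix minima of W in one
   residue class j modulo m. So T is determined by (j, A), and every j in {0..<m} together with
   every n-periodic A arises, provided A sums to l - s over a period (W drops by m s per period).
   Counting weak compositions of l - s into n parts gives m * C(n + l - s - 1, n - 1). *)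

section \<open>Laminar families of integer intervals\<close>

definition laminar :: "(int \<times> int) set \<Rightarrow> bool" where
  "laminar F \<longleftrightarrow>
     (\<forall>(a, b)\<in>F. \<forall>(c, d)\<in>F. \<not> (a < c \<and> c < b \<and> b < d)) \<and> (\<forall>(a, b)\<in>F. a < b)"

lemma laminarD_noncrossing:
  "laminar F \<Longrightarrow> (a, b) \<in> F \<Longrightarrow> (c, d) \<in> F \<Longrightarrow> \<not> (a < c \<and> c < b \<and> b < d)"
  unfolding laminar_def by blast

lemma laminarD_less: "laminar F \<Longrightarrow> p \<in> F \<Longrightarrow> fst p < snd p"
  unfolding laminar_def by auto

lemma laminar_subset: "laminar F \<Longrightarrow> G \<subseteq> F \<Longrightarrow> laminar G"
  unfolding laminar_def by blast

lemma mem_within: "p \<in> within F x y \<longleftrightarrow> p \<in> F \<and> x \<le> fst p \<and> snd p \<le> y"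
  by (cases p) (auto simp: within_def)

lemma finite_within:
  assumes "laminar F"
  shows "finite (within F x y)"
proof (rule finite_subset)
  show "within F x y \<subseteq> {x..y} \<times> {x..y}"
    using laminarD_less[OF assms] by (force simp: mem_within)
qed simp

lemma laminar_nested:
  assumes "laminar F" "p \<in> F" "q \<in> F"
    and "fst p \<le> t" "t + 1 \<le> snd p" "fst q \<le> t" "t + 1 \<le> snd q"
  shows "(fst p \<le> fst q \<and> snd q \<le> snd p) \<or> (fst q \<le> fst p \<and> snd p \<le> snd q)"
  using assms laminarD_noncrossing[OF assms(1), of "fst p" "snd p" "fst q" "snd q"]
    laminarD_noncrossing[OF assms(1), of "fst q" "snd q" "fst p" "snd p"]
  by auto

definition outermost :: "(int \<times> int) set \<Rightarrow> int \<Rightarrow> int \<Rightarrow> (int \<times> int) set" where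
  "outermost F x y =
     {(c, d) \<in> within F x y. \<not> (\<exists>(c', d') \<in> within F x y. (c', d') \<noteq> (c, d) \<and> c' \<le> c \<and> d \<le> d')}"

definition uncovered :: "(int \<times> int) set \<Rightarrow> int \<Rightarrow> int \<Rightarrow> int set" where
  "uncovered F x y = {t. x \<le> t \<and> t + 1 \<le> y \<and> \<not> (\<exists>(c, d) \<in> within F x y. c \<le> t \<and> t + 1 \<le> d)}"

lemma pieces_eq_card: "pieces F x y = card (outermost F x y) + card (uncovered F x y)"
  unfolding pieces_def outermost_def uncovered_def ..

lemma mem_outermost:
  "M \<in> outermost F x y \<longleftrightarrow>
     M \<in> within F x y \<and> (\<forall>q\<in>within F x y. q \<noteq> M \<longrightarrow> \<not> (fst q \<le> fst M \<and> snd M \<le> snd q))"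
  unfolding outermost_def by (cases M) auto

lemma outermost_subset: "outermost F x y \<subseteq> within F x y"
  by (auto simp: mem_outermost)

lemma outermostD: "M \<in> outermost F x y \<Longrightarrow> M \<in> F \<and> x \<le> fst M \<and> snd M \<le> y"
  by (auto simp: mem_outermost mem_within)

lemma finite_outermost: "laminar F \<Longrightarrow> finite (outermost F x y)"
  using finite_within outermost_subset by (rule finite_subset[rotated])

lemma finite_uncovered: "finite (uncovered F x y)"
  by (rule finite_subset[of _ "{x..<y}"]) (auto simp: uncovered_def)

lemma outermost_above:
  assumes "laminar F" "e \<in> within F x y"
  shows "\<exists>M\<in>outermost F x y. fst M \<le> fst e \<and> snd e \<le> snd M"
proof -
  define E where "E = {q \<in> within F x y. fst q \<le> fst e \<and> snd e \<le> snd q}"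
  have "finite E" using finite_within[OF assms(1)] unfolding E_def by auto
  moreover have "e \<in> E" using assms(2) unfolding E_def by simp
  then have "E \<noteq> {}" by blast
  ultimately obtain M where M: "M \<in> E" and longest: "\<And>q. q \<in> E \<Longrightarrow> snd q - fst q \<le> snd M - fst M"
    using ex_is_arg_min_if_finite[of E "\<lambda>q. fst q - snd q"] unfolding is_arg_min_def by force
  have "M \<in> outermost F x y"
    unfolding mem_outermost
  proof (intro conjI ballI impI notI)
    show "M \<in> within F x y" using M unfolding E_def by simp
    fix q assume "q \<in> within F x y" "q \<noteq> M" "fst q \<le> fst M \<and> snd M \<le> snd q"
    then have "q \<in> E" and "snd M - fst M < snd q - fst q"
      using M prod_eq_iff[of q M] unfolding E_def by auto
    then show False using longest[of q] by linarith
  qed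
  then show ?thesis using M unfolding E_def by blast
qed

lemma outermost_cover_unique:
  assumes "laminar F" "M1 \<in> outermost F x y" "M2 \<in> outermost F x y"
    and "fst M1 \<le> t" "t + 1 \<le> snd M1" "fst M2 \<le> t" "t + 1 \<le> snd M2"
  shows "M1 = M2"
proof (rule ccontr)
  assume "M1 \<noteq> M2"
  moreover have "M1 \<in> F" "M2 \<in> F"
    using outermostD assms(2,3) by auto
  ultimately show False
    using laminar_nested[OF assms(1) _ _ assms(4-7)] assms(2,3) unfolding mem_outermost by metis
qed

lemma within_eq_UN_outermost:
  assumes "laminar F"
  shows "within F x y = (\<Union>M\<in>outermost F x y. within F (fst M) (snd M))"
proof
  show "within F x y \<subseteq> (\<Union>M\<in>outermost F x y. within F (fst M) (snd M))"
    using outermost_above[OF assms] by (fastforce simp: mem_within)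
  show "(\<Union>M\<in>outermost F x y. within F (fst M) (snd M)) \<subseteq> within F x y"
    using outermost_subset by (fastforce simp: mem_within)
qed

lemma card_within_outermost:
  assumes "laminar F"
  shows "card (within F x y) = (\<Sum>M\<in>outermost F x y. card (within F (fst M) (snd M)))"
  unfolding within_eq_UN_outermost[OF assms, of x y]
proof (rule card_UN_disjoint)
  show "finite (outermost F x y)" using finite_outermost[OF assms] .
  show "\<forall>M\<in>outermost F x y. finite (within F (fst M) (snd M))"
    using finite_within[OF assms] by blast
  show "\<forall>M1\<in>outermost F x y. \<forall>M2\<in>outermost F x y. M1 \<noteq> M2 \<longrightarrow>
          within F (fst M1) (snd M1) \<inter> within F (fst M2) (snd M2) = {}"
  proof (intro ballI impI equals0I)
    fix M1 M2 e
    assume M: "M1 \<in> outermost F x y" "M2 \<in> outermost F x y" "M1 \<noteq> M2"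
      and e: "e \<in> within F (fst M1) (snd M1) \<inter> within F (fst M2) (snd M2)"
    then have "fst e < snd e" using laminarD_less[OF assms] by (auto simp: mem_within)
    then show False
      using outermost_cover_unique[OF assms M(1,2), of "fst e"] e M(3) by (auto simp: mem_within)
  qed
qed

lemma segments_eq_uncovered_outermost:
  assumes "laminar F"
  shows "{x..<y} = uncovered F x y \<union> (\<Union>M\<in>outermost F x y. {fst M..<snd M})"
proof
  show "{x..<y} \<subseteq> uncovered F x y \<union> (\<Union>M\<in>outermost F x y. {fst M..<snd M})"
  proof
    fix t assume t: "t \<in> {x..<y}"
    show "t \<in> uncovered F x y \<union> (\<Union>M\<in>outermost F x y. {fst M..<snd M})"
    proof (cases "t \<in> uncovered F x y")
      case False
      then obtain e where e: "e \<in> within F x y" "fst e \<le> t" "t + 1 \<le> snd e"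
        using t unfolding uncovered_def by auto
      obtain M where "M \<in> outermost F x y" "fst M \<le> fst e" "snd e \<le> snd M"
        using outermost_above[OF assms e(1)] by blast
      then have "M \<in> outermost F x y" "fst M \<le> t" "t + 1 \<le> snd M" using e by auto
      then show ?thesis by auto
    qed simp
  qed
  show "uncovered F x y \<union> (\<Union>M\<in>outermost F x y. {fst M..<snd M}) \<subseteq> {x..<y}"
    unfolding uncovered_def by (auto dest!: outermostD)
qed

lemma uncovered_disjoint_outermost:
  "uncovered F x y \<inter> (\<Union>M\<in>outermost F x y. {fst M..<snd M}) = {}"
proof -
  have "t \<notin> uncovered F x y" if "M \<in> outermost F x y" "fst M \<le> t" "t < snd M" for M t
  proof -
    have "M \<in> within F x y" using that(1) outermost_subset by blast
    then have "\<exists>(c, d)\<in>within F x y. c \<le> t \<and> t + 1 \<le> d"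
      using that(2,3) by (intro bexI[of _ M]) (auto simp: case_prod_beta)
    then show ?thesis unfolding uncovered_def by blast
  qed
  then show ?thesis by auto
qed

lemma length_eq_uncovered_outermost:
  assumes "laminar F" "x \<le> y"
  shows "y - x = int (card (uncovered F x y)) + (\<Sum>M\<in>outermost F x y. snd M - fst M)"
proof -
  let ?O = "outermost F x y"
  have finO: "finite ?O" using finite_outermost[OF assms(1)] .
  have "card (\<Union>M\<in>?O. {fst M..<snd M}) = (\<Sum>M\<in>?O. card {fst M..<snd M})"
  proof (intro card_UN_disjoint finO ballI impI equals0I)
    fix M1 M2 t assume "M1 \<in> ?O" "M2 \<in> ?O" "M1 \<noteq> M2" "t \<in> {fst M1..<snd M1} \<inter> {fst M2..<snd M2}"
    then show False using outermost_cover_unique[OF assms(1), of M1 x y M2 t] by auto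
  qed simp
  then have "int (card {x..<y}) = int (card (uncovered F x y)) + (\<Sum>M\<in>?O. int (card {fst M..<snd M}))"
    unfolding segments_eq_uncovered_outermost[OF assms(1), of x y]
    using uncovered_disjoint_outermost finite_uncovered finO by (simp add: card_Un_disjoint)
  moreover have "int (card {fst M..<snd M}) = snd M - fst M" if "M \<in> ?O" for M
    using outermostD[OF that] laminarD_less[OF assms(1)] by fastforce
  ultimately show ?thesis using assms(2) by simp
qed

text \<open>If the chords of \<open>F\<close> nested in \<open>(a, b)\<close>, say \<open>c\<close> of them including \<open>(a, b)\<close>,
  cut the region below \<open>(a, b)\<close> into \<open>(m + 2)\<close>-gons, counting sides gives
  \<open>c (m + 2) = 2 (c - 1) + 1 + (b - a)\<close>, that is \<open>m c = b - a - 1\<close>.\<close>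

definition balanced :: "nat \<Rightarrow> (int \<times> int) set \<Rightarrow> int \<times> int \<Rightarrow> bool" where
  "balanced m F p \<longleftrightarrow> int m * int (card (within F (fst p) (snd p))) = snd p - fst p - 1"

lemma within_balance_eq_pieces:
  assumes "laminar F" "x \<le> y" "\<forall>p\<in>within F x y. balanced m F p"
  shows "int m * int (card (within F x y)) - (y - x) = - int (pieces F x y)"
proof -
  let ?O = "outermost F x y"
  have "int m * int (card (within F x y)) - (y - x)
      = (\<Sum>M\<in>?O. int m * int (card (within F (fst M) (snd M))) - (snd M - fst M))
        - int (card (uncovered F x y))"
    unfolding card_within_outermost[OF assms(1), of x y]
      length_eq_uncovered_outermost[OF assms(1,2)]
    by (simp add: sum_subtractf sum_distrib_left)
  also have "\<dots> = (\<Sum>M\<in>?O. -1) - int (card (uncovered F x y))"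
  proof -
    have "M \<in> within F x y" if "M \<in> ?O" for M
      using that outermost_subset by blast
    then show ?thesis using assms(3) unfolding balanced_def by simp
  qed
  finally show ?thesis unfolding pieces_eq_card by simp
qed

lemma pieces_pos:
  assumes "laminar F" "x < y"
  shows "1 \<le> pieces F x y"
proof (cases "x \<in> uncovered F x y")
  case True
  then have "card (uncovered F x y) \<noteq> 0" using finite_uncovered by auto
  then show ?thesis unfolding pieces_eq_card by simp
next
  case False
  then obtain e where "e \<in> within F x y" using assms(2) unfolding uncovered_def by auto
  then obtain M where "M \<in> outermost F x y" using outermost_above[OF assms(1)] by blast
  then have "card (outermost F x y) \<noteq> 0" using finite_outermost[OF assms(1)] by auto
  then show ?thesis unfolding pieces_eq_card by simp
qed

lemma within_Diff_singleton: "within (C - {p}) x y = within C x y - {p}"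
  unfolding within_def by blast

lemma within_remove_outer:
  assumes "q \<in> within C a b" "q \<noteq> (a, b)"
  shows "within (C - {(a, b)}) (fst q) (snd q) = within C (fst q) (snd q)"
proof -
  have "(a, b) \<notin> within C (fst q) (snd q)"
  proof
    assume "(a, b) \<in> within C (fst q) (snd q)"
    then have "fst q \<le> a" "b \<le> snd q" by (simp_all add: mem_within)
    moreover have "a \<le> fst q" "snd q \<le> b" using assms(1) by (simp_all add: mem_within)
    ultimately show False using assms(2) by (simp add: prod_eq_iff)
  qed
  then show ?thesis unfolding within_Diff_singleton by simp
qed

lemma card_within_remove_outer:
  assumes "laminar C" "(a, b) \<in> C"
  shows "card (within C a b) = card (within (C - {(a, b)}) a b) + 1"
proof -
  have "(a, b) \<in> within C a b" using assms(2) by (simp add: mem_within)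
  from card.remove[OF finite_within[OF assms(1)] this] show ?thesis
    unfolding within_Diff_singleton by simp
qed

lemma chord_face_iff_balanced:
  assumes "laminar C" "(a, b) \<in> C" "\<forall>q\<in>within C a b - {(a, b)}. balanced m C q"
  shows "pieces (C - {(a, b)}) a b = m + 1 \<longleftrightarrow> balanced m C (a, b)"
proof -
  let ?F = "C - {(a, b)}"
  have "laminar ?F" using assms(1) by (rule laminar_subset) blast
  moreover have "a \<le> b" using laminarD_less[OF assms(1,2)] by simp
  moreover have "balanced m ?F q" if "q \<in> within ?F a b" for q
  proof -
    have q: "q \<in> within C a b" "q \<noteq> (a, b)" using that unfolding within_Diff_singleton by auto
    then show ?thesis
      using assms(3) unfolding balanced_def within_remove_outer[OF q] by blast
  qed
  ultimately have "int m * int (card (within ?F a b)) - (b - a) = - int (pieces ?F a b)"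
    by (intro within_balance_eq_pieces) auto
  then show ?thesis
    unfolding balanced_def fst_conv snd_conv card_within_remove_outer[OF assms(1,2)]
    by (auto simp: distrib_left)
qed

lemma balanced_if_chord_faces:
  assumes "laminar C" "\<forall>(a, b)\<in>C. pieces (C - {(a, b)}) a b = m + 1" "p \<in> C"
  shows "balanced m C p"
  using assms(3)
proof (induction "nat (snd p - fst p)" arbitrary: p rule: less_induct)
  case less
  obtain a b where p: "p = (a, b)" by (cases p)
  have "balanced m C q" if "q \<in> within C a b - {(a, b)}" for q
  proof (rule less.hyps)
    have "fst q < snd q" using that laminarD_less[OF assms(1)] by (auto simp: mem_within)
    then show "nat (snd q - fst q) < nat (snd p - fst p)"
      using that p prod_eq_iff[of q "(a, b)"] by (auto simp: mem_within)
    show "q \<in> C" using that by (simp add: mem_within)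
  qed
  moreover have "pieces (C - {(a, b)}) a b = m + 1" using assms(2) less.prems p by auto
  ultimately show ?case using chord_face_iff_balanced[OF assms(1)] less.prems p by blast
qed

section \<open>The walk of a laminar family\<close>

definition walk :: "nat \<Rightarrow> (int \<Rightarrow> nat) \<Rightarrow> int \<Rightarrow> int" where
  "walk m A t =
     (if 0 \<le> t then (\<Sum>u\<in>{0..<t}. int m * int (A u) - 1) else - (\<Sum>u\<in>{t..<0}. int m * int (A u) - 1))"

lemma walk_succ: "walk m A (t + 1) = walk m A t + int m * int (A t) - 1"
proof -
  consider "0 \<le> t" | "t = -1" | "t < -1" by linarith
  then show ?thesis
  proof cases
    case 1
    then have "{0..<t + 1} = insert t {0..<t}" by auto
    with 1 show ?thesis by (simp add: walk_def)
  next
    case 2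
    then have "{t..<0} = {t}" by auto
    with 2 show ?thesis by (simp add: walk_def)
  next
    case 3
    then have "{t..<0} = insert t {t + 1..<0}" by auto
    with 3 show ?thesis by (simp add: walk_def)
  qed
qed

lemma walk_diff:
  assumes "x \<le> y"
  shows "walk m A y - walk m A x = int m * (\<Sum>u\<in>{x..<y}. int (A u)) - (y - x)"
  using assms
proof (induction y rule: int_ge_induct)
  case (step y)
  have "{x..<y + 1} = insert y {x..<y}" using step.hyps by auto
  then show ?case using step walk_succ[of m A y] by (simp add: distrib_left)
qed simp

lemma walk_succ_ge: "walk m A t - 1 \<le> walk m A (t + 1)"
proof -
  have "0 \<le> int m * int (A t)" by simp
  then show ?thesis using walk_succ[of m A t] by linarith
qed

lemma card_starting_in:
  fixes C :: "(int \<times> int) set"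
  assumes "\<And>u. finite {d. (u, d) \<in> C}"
  shows "card {p\<in>C. x \<le> fst p \<and> fst p < y} = (\<Sum>u\<in>{x..<y}. card {d. (u, d) \<in> C})"
proof -
  have "{p\<in>C. x \<le> fst p \<and> fst p < y} = (\<Union>u\<in>{x..<y}. Pair u ` {d. (u, d) \<in> C})"
    by force
  moreover have "card (\<Union>u\<in>{x..<y}. Pair u ` {d. (u, d) \<in> C})
      = (\<Sum>u\<in>{x..<y}. card (Pair u ` {d. (u, d) \<in> C}))"
    by (rule card_UN_disjoint) (auto simp: assms)
  ultimately show ?thesis by (simp add: card_image inj_on_def)
qed

locale chord_walk =
  fixes m :: nat and C :: "(int \<times> int) set" and A :: "int \<Rightarrow> nat"
  assumes laminar: "laminar C"
    and finite_ends: "\<And>u. finite {d. (u, d) \<in> C}"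
    and card_ends: "\<And>u. card {d. (u, d) \<in> C} = A u"
begin

lemma walk_diff_chords:
  "x \<le> y \<Longrightarrow> walk m A y - walk m A x = int m * int (card {p\<in>C. x \<le> fst p \<and> fst p < y}) - (y - x)"
  using walk_diff[of x y m A] card_starting_in[OF finite_ends, of x y] by (simp add: card_ends)

lemma card_starting_under_chord:
  assumes "(c, d) \<in> C"
  shows "card {p\<in>C. c \<le> fst p \<and> fst p < d} = card (within C c d) + card {d'. (c, d') \<in> C \<and> d < d'}"
proof -
  have "{p\<in>C. c \<le> fst p \<and> fst p < d} = within C c d \<union> Pair c ` {d'. (c, d') \<in> C \<and> d < d'}"
  proof (intro set_eqI iffI)
    fix p assume p: "p \<in> {p\<in>C. c \<le> fst p \<and> fst p < d}"
    show "p \<in> within C c d \<union> Pair c ` {d'. (c, d') \<in> C \<and> d < d'}"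
    proof (cases "fst p = c")
      case True
      then show ?thesis using p by (cases "snd p \<le> d") (auto simp: mem_within image_iff prod_eq_iff)
    next
      case False
      then have "snd p \<le> d"
        using p laminarD_noncrossing[OF laminar assms, of "fst p" "snd p"] by auto
      then show ?thesis using p by (simp add: mem_within)
    qed
  next
    fix p assume "p \<in> within C c d \<union> Pair c ` {d'. (c, d') \<in> C \<and> d < d'}"
    moreover have "fst p < d" if "p \<in> within C c d"
      using that laminarD_less[OF laminar, of p] by (simp add: mem_within)
    moreover have "c < d" using laminarD_less[OF laminar assms] by simp
    ultimately show "p \<in> {p\<in>C. c \<le> fst p \<and> fst p < d}" by (auto simp: mem_within)
  qed
  moreover have "finite {d'. (c, d') \<in> C \<and> d < d'}"
    using finite_ends[of c] by (rule rev_finite_subset) auto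
  moreover have "within C c d \<inter> Pair c ` {d'. (c, d') \<in> C \<and> d < d'} = {}"
    by (auto simp: mem_within)
  ultimately show ?thesis
    using finite_within[OF laminar] by (simp add: card_Un_disjoint card_image inj_on_def)
qed

lemma balanced_iff_walk:
  assumes "(c, d) \<in> C"
  shows "balanced m C (c, d) \<longleftrightarrow>
           walk m A d = walk m A c + int m * int (card {d'. (c, d') \<in> C \<and> d < d'}) - 1"
  using walk_diff_chords[of c d] laminarD_less[OF laminar assms]
  unfolding balanced_def card_starting_under_chord[OF assms] by (auto simp: algebra_simps)

context
  assumes all_balanced: "\<forall>p\<in>C. balanced m C p"
begin

lemma walk_drop_eq_pieces:
  assumes "x \<le> y" "\<forall>p\<in>C. x \<le> fst p \<longrightarrow> fst p < y \<longrightarrow> snd p \<le> y"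
  shows "walk m A y - walk m A x = - int (pieces C x y)"
proof -
  have "{p\<in>C. x \<le> fst p \<and> fst p < y} = within C x y"
    using assms(2) laminarD_less[OF laminar] by (force simp: mem_within)
  then have "walk m A y - walk m A x = int m * int (card (within C x y)) - (y - x)"
    using walk_diff_chords[OF assms(1)] by simp
  also have "\<dots> = - int (pieces C x y)"
    using all_balanced by (intro within_balance_eq_pieces laminar assms(1)) (simp add: mem_within)
  finally show ?thesis .
qed

lemma walk_drop_to_uncrossed:
  assumes "x \<le> y" "\<forall>(a, b)\<in>C. \<not> (a < y \<and> y < b)"
  shows "walk m A y - walk m A x = - int (pieces C x y)"
  using assms by (intro walk_drop_eq_pieces) force+

lemma walk_above_uncrossed:
  assumes "x < y" "\<forall>(a, b)\<in>C. \<not> (a < y \<and> y < b)"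
  shows "walk m A y < walk m A x"
  using walk_drop_to_uncrossed[OF _ assms(2), of x] pieces_pos[OF laminar assms(1)] assms(1) by simp

lemma walk_above_chord_end:
  assumes "(c, d) \<in> C" "c < u" "u < d"
  shows "walk m A d < walk m A u"
proof -
  have "\<forall>p\<in>C. u \<le> fst p \<longrightarrow> fst p < d \<longrightarrow> snd p \<le> d"
    using laminarD_noncrossing[OF laminar assms(1)] assms(2) by fastforce
  then have "walk m A d - walk m A u = - int (pieces C u d)"
    using assms(3) by (intro walk_drop_eq_pieces) simp_all
  then show ?thesis using pieces_pos[OF laminar assms(3)] by simp
qed

end

end

section \<open>First hits, records and periodic sets\<close>

lemma bij_betw_card_greater:
  fixes S :: "'a::linorder set"
  assumes "finite S"
  shows "bij_betw (\<lambda>x. card {y\<in>S. x < y}) S {0..<card S}"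
proof -
  let ?f = "\<lambda>x. card {y\<in>S. x < y}"
  have less: "?f y < ?f x" if "x \<in> S" "y \<in> S" "x < y" for x y
    using that assms by (intro psubset_card_mono) auto
  have "inj_on ?f S"
  proof (rule inj_onI)
    fix x y assume "x \<in> S" "y \<in> S" "?f x = ?f y"
    then show "x = y" using less[of x y] less[of y x] by (cases x y rule: linorder_cases) auto
  qed
  moreover have "?f ` S \<subseteq> {0..<card S}"
    using assms by (auto intro!: psubset_card_mono)
  ultimately show ?thesis
    by (simp add: bij_betw_def card_image card_subset_eq)
qed

lemma first_hit_unique:
  fixes f :: "int \<Rightarrow> int"
  assumes "c < d1" "\<forall>u. c < u \<and> u < d1 \<longrightarrow> f d1 < f u"
    and "c < d2" "\<forall>u. c < u \<and> u < d2 \<longrightarrow> f d2 < f u"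
    and "f d1 = f d2"
  shows "d1 = d2"
  using assms by (cases d1 d2 rule: linorder_cases) fastforce+

lemma first_hit_exists:
  fixes f :: "int \<Rightarrow> int"
  assumes steps: "\<And>t. f t - 1 \<le> f (t + 1)" and "L \<le> f x" "x \<le> y" "f y \<le> L"
  shows "\<exists>t\<ge>x. f t = L \<and> (\<forall>u. x \<le> u \<and> u < t \<longrightarrow> L < f u)"
proof -
  define k where "k = (LEAST k::nat. f (x + int k) \<le> L)"
  have below: "f (x + int k) \<le> L"
    unfolding k_def by (rule LeastI[of _ "nat (y - x)"]) (use assms in simp)
  have above: "L < f u" if "x \<le> u" "u < x + int k" for u
  proof -
    have "nat (u - x) < k" using that by linarith
    then have "\<not> f (x + int (nat (u - x))) \<le> L" unfolding k_def by (rule not_less_Least)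
    then show ?thesis using that by simp
  qed
  have "f (x + int k) = L"
  proof (cases "k = 0")
    case False
    then show ?thesis
      using above[of "x + int k - 1"] steps[of "x + int k - 1"] below by simp
  qed (use below assms in simp)
  then show ?thesis using above by (intro exI[of _ "x + int k"]) auto
qed

definition records :: "(int \<Rightarrow> int) \<Rightarrow> int set" where
  "records f = {r. \<forall>u<r. f r < f u}"

lemma records_less_iff:
  assumes "q1 \<in> records f" "q2 \<in> records f"
  shows "q1 < q2 \<longleftrightarrow> f q2 < f q1"
  using assms unfolding records_def by (cases q1 q2 rule: linorder_cases) auto

lemma records_inj: "q1 \<in> records f \<Longrightarrow> q2 \<in> records f \<Longrightarrow> f q1 = f q2 \<Longrightarrow> q1 = q2"
  unfolding records_def by (cases q1 q2 rule: linorder_cases) fastforce+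

lemma periodic_successor:
  fixes R :: "int set"
  assumes "0 < n" "\<And>r. r \<in> R \<Longrightarrow> r + int n \<in> R" "r \<in> R"
  shows "\<exists>r'\<in>R. r < r' \<and> (\<forall>\<rho>\<in>R. r < \<rho> \<longrightarrow> r' \<le> \<rho>)"
proof -
  let ?S = "R \<inter> {r<..r + int n}"
  have fin: "finite ?S" by simp
  have "r + int n \<in> ?S" using assms by auto
  then have "?S \<noteq> {}" by blast
  then have min: "Min ?S \<in> ?S" using Min_in[OF fin] by blast
  show ?thesis
  proof (intro bexI conjI ballI impI)
    fix \<rho> assume "\<rho> \<in> R" "r < \<rho>"
    then show "Min ?S \<le> \<rho>" using min fin by (cases "\<rho> \<le> r + int n") auto
  qed (use min in auto)
qed

lemma periodic_predecessor:
  fixes R :: "int set"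
  assumes "0 < n" "\<And>r t. r \<in> R \<Longrightarrow> r + t * int n \<in> R" "R \<noteq> {}"
  shows "\<exists>r\<in>R. r \<le> u \<and> (\<forall>\<rho>\<in>R. \<rho> \<le> u \<longrightarrow> \<rho> \<le> r)"
proof -
  obtain r0 where "r0 \<in> R" using assms(3) by blast
  let ?r1 = "r0 + ((u - r0) div int n) * int n"
  let ?S = "R \<inter> {u - int n<..u}"
  have "?r1 = u - (u - r0) mod int n"
    using div_mult_mod_eq[of "u - r0" "int n"] by linarith
  moreover have "0 \<le> (u - r0) mod int n" "(u - r0) mod int n < int n" using assms(1) by simp_all
  ultimately have "?r1 \<in> ?S" using assms(2)[OF \<open>r0 \<in> R\<close>, of "(u - r0) div int n"] by auto
  moreover have fin: "finite ?S" by simp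
  ultimately have "?S \<noteq> {}" by blast
  then have max: "Max ?S \<in> ?S" using Max_in[OF fin] by blast
  show ?thesis
  proof (intro bexI conjI ballI impI)
    fix \<rho> assume "\<rho> \<in> R" "\<rho> \<le> u"
    then show "\<rho> \<le> Max ?S" using max fin by (cases "u - int n < \<rho>") auto
  qed (use max in auto)
qed

lemma bij_betw_mod_window:
  assumes "0 < n"
  shows "bij_betw (\<lambda>u. u mod int n) {a..<a + int n} {0..<int n}"
proof (rule bij_betw_imageI)
  have window: "u = a + (u - a) mod int n" if "u \<in> {a..<a + int n}" for u
    using that by simp
  show "inj_on (\<lambda>u. u mod int n) {a..<a + int n}"
  proof (rule inj_onI)
    fix u v assume "u \<in> {a..<a + int n}" "v \<in> {a..<a + int n}" "u mod int n = v mod int n"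
    then show "u = v" using window[of u] window[of v] by (metis mod_diff_cong)
  qed
  show "(\<lambda>u. u mod int n) ` {a..<a + int n} = {0..<int n}"
  proof (intro subset_antisym subsetI)
    fix y assume y: "y \<in> {0..<int n}"
    have "(a + (y - a) mod int n) mod int n = y" using y by (simp add: mod_add_right_eq)
    moreover have "a + (y - a) mod int n \<in> {a..<a + int n}" using assms by simp
    ultimately show "y \<in> (\<lambda>u. u mod int n) ` {a..<a + int n}" by (metis image_eqI)
  qed (use assms in auto)
qed

lemma sum_periodic_window:
  assumes "0 < n" "\<And>u. f (u mod int n) = f u"
  shows "(\<Sum>u\<in>{a..<a + int n}. f u) = (\<Sum>u\<in>{0..<int n}. f u)"
  using sum.reindex_bij_betw[OF bij_betw_mod_window[OF assms(1), of a], of f] assms(2) by simp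

lemma card_periodic_window:
  assumes "0 < n" "\<And>u. u mod int n \<in> P \<longleftrightarrow> u \<in> P"
  shows "card (P \<inter> {a..<a + int n}) = card (P \<inter> {0..<int n})"
proof -
  have "card (P \<inter> S) = (\<Sum>u\<in>S. if u \<in> P then 1 else 0)" if "finite S" for S
    using that by (simp add: sum.inter_restrict[symmetric] Int_commute)
  then show ?thesis using sum_periodic_window[OF assms(1), of "\<lambda>u. if u \<in> P then 1 else 0" a] assms(2)
    by simp
qed

section \<open>From an angulation to its walk\<close>

lemma Chord_in_arcs: "Chord i k \<in> arcs n \<longleftrightarrow> i < n \<and> 2 \<le> k \<and> k \<le> n"
  by (auto simp: arcs_def)

lemma Spoke_in_arcs: "Spoke i \<in> arcs n \<longleftrightarrow> i < n"
  by (auto simp: arcs_def)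

lemma mem_lift_chords:
  assumes "T \<subseteq> arcs n" "0 < n"
  shows "(a, b) \<in> lift_chords n T \<longleftrightarrow> a \<le> b \<and> Chord (nat (a mod int n)) (nat (b - a)) \<in> T"
proof
  assume "(a, b) \<in> lift_chords n T"
  then obtain i k t where ikt: "Chord i k \<in> T" "a = int i + t * int n" "b = a + int k"
    unfolding lift_chords_def by blast
  then have "i < n" using assms(1) Chord_in_arcs by blast
  then show "a \<le> b \<and> Chord (nat (a mod int n)) (nat (b - a)) \<in> T" using ikt by simp
next
  assume ab: "a \<le> b \<and> Chord (nat (a mod int n)) (nat (b - a)) \<in> T"
  have "a = int (nat (a mod int n)) + (a div int n) * int n"
    and "b = int (nat (a mod int n)) + (a div int n) * int n + int (nat (b - a))"
    using assms(2) ab by simp_all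
  then show "(a, b) \<in> lift_chords n T" unfolding lift_chords_def using ab by blast
qed

lemma mem_lift_rays:
  assumes "T \<subseteq> arcs n" "0 < n"
  shows "r \<in> lift_rays n T \<longleftrightarrow> Spoke (nat (r mod int n)) \<in> T"
proof
  assume "r \<in> lift_rays n T"
  then obtain i t where it: "Spoke i \<in> T" "r = int i + t * int n"
    unfolding lift_rays_def by blast
  then have "i < n" using assms(1) Spoke_in_arcs by blast
  then show "Spoke (nat (r mod int n)) \<in> T" using it by simp
next
  assume "Spoke (nat (r mod int n)) \<in> T"
  moreover have "r = int (nat (r mod int n)) + (r div int n) * int n" using assms(2) by simp
  ultimately show "r \<in> lift_rays n T" unfolding lift_rays_def by blast
qed

definition walk_chords :: "nat \<Rightarrow> (int \<Rightarrow> nat) \<Rightarrow> (int \<times> int) set" where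
  "walk_chords m A =
     {(c, d). c < d \<and> (\<exists>k<A c. walk m A d = walk m A c + int m * int k - 1)
        \<and> (\<forall>u. c < u \<and> u < d \<longrightarrow> walk m A d < walk m A u)}"

definition walk_rays :: "nat \<Rightarrow> (int \<Rightarrow> nat) \<Rightarrow> int \<Rightarrow> int set" where
  "walk_rays m A j = {r \<in> records (walk m A). walk m A r mod int m = j}"

definition chord_count :: "nat \<Rightarrow> parc set \<Rightarrow> int \<Rightarrow> nat" where
  "chord_count n T u = card {k. Chord (nat (u mod int n)) k \<in> T}"

definition spoke_residue :: "nat \<Rightarrow> nat \<Rightarrow> parc set \<Rightarrow> int" where
  "spoke_residue m n T = walk m (chord_count n T) (int (LEAST i. Spoke i \<in> T)) mod int m"

locale lifted_angulation =
  fixes m n :: nat and T :: "parc set"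
  assumes m_pos: "0 < m" and angulation: "is_angulation m n T"
begin

abbreviation chords :: "(int \<times> int) set" where "chords \<equiv> lift_chords n T"
abbreviation rays :: "int set" where "rays \<equiv> lift_rays n T"
abbreviation W :: "int \<Rightarrow> int" where "W \<equiv> walk m (chord_count n T)"

lemma subset_arcs: "T \<subseteq> arcs n"
  using angulation by (simp add: is_angulation_def)

lemma rays_nonempty: "rays \<noteq> {}"
  using angulation by (simp add: is_angulation_def)

lemma n_pos: "0 < n"
proof -
  obtain i where "Spoke i \<in> T" using rays_nonempty unfolding lift_rays_def by blast
  then have "i < n" using subset_arcs Spoke_in_arcs by blast
  then show ?thesis by simp
qed

lemmas mem_chords = mem_lift_chords[OF subset_arcs n_pos]
lemmas mem_rays = mem_lift_rays[OF subset_arcs n_pos]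

lemma chord_bounds:
  assumes "(a, b) \<in> chords"
  shows "a + 2 \<le> b \<and> b \<le> a + int n"
proof -
  have "a \<le> b" "Chord (nat (a mod int n)) (nat (b - a)) \<in> T" using assms by (simp_all add: mem_chords)
  moreover from this(2) have "2 \<le> nat (b - a) \<and> nat (b - a) \<le> n"
    using subset_arcs Chord_in_arcs by blast
  ultimately show ?thesis by linarith
qed

lemma rays_shift: "r \<in> rays \<Longrightarrow> r + t * int n \<in> rays"
  unfolding mem_rays by simp

lemma angulation_noncrossing: "noncrossing n T"
  using angulation unfolding is_angulation_def by (elim conjE)

lemma chords_noncrossing: "(a, b) \<in> chords \<Longrightarrow> (c, d) \<in> chords \<Longrightarrow> \<not> (a < c \<and> c < b \<and> b < d)"
  using angulation_noncrossing unfolding noncrossing_def by blast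

lemma ray_uncrossed: "r \<in> rays \<Longrightarrow> \<forall>(a, b)\<in>chords. \<not> (a < r \<and> r < b)"
  using angulation_noncrossing unfolding noncrossing_def by blast

lemma laminar_chords: "laminar chords"
  unfolding laminar_def using chords_noncrossing chord_bounds by fastforce

lemma chord_faces: "\<forall>(a, b)\<in>chords. pieces (chords - {(a, b)}) a b = m + 1"
proof -
  have "\<forall>(a, b)\<in>chords. 1 + pieces (chords - {(a, b)}) a b = m + 2"
    using angulation unfolding is_angulation_def by (elim conjE)
  then show ?thesis by simp
qed

lemma gap_faces:
  assumes "r \<in> rays" "r' \<in> rays" "r < r'" "\<forall>\<rho>\<in>rays. r < \<rho> \<longrightarrow> r' \<le> \<rho>"
  shows "pieces chords r r' = m"
proof -
  have "\<forall>r\<in>rays. \<forall>r'\<in>rays. r < r' \<and> \<not> (\<exists>r''\<in>rays. r < r'' \<and> r'' < r') \<longrightarrow>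
          2 + pieces chords r r' = m + 2"
    using angulation unfolding is_angulation_def by (elim conjE)
  moreover have "\<not> (\<exists>r''\<in>rays. r < r'' \<and> r'' < r')" using assms(4) by force
  ultimately show ?thesis using assms(1-3) by simp
qed

lemma card_chord_ends: "card {d. (u, d) \<in> chords} = chord_count n T u"
proof -
  have "bij_betw (\<lambda>d. nat (d - u)) {d. (u, d) \<in> chords} {k. Chord (nat (u mod int n)) k \<in> T}"
  proof (rule bij_betw_imageI)
    show "inj_on (\<lambda>d. nat (d - u)) {d. (u, d) \<in> chords}"
      by (rule inj_onI) (auto simp: mem_chords)
    show "(\<lambda>d. nat (d - u)) ` {d. (u, d) \<in> chords} = {k. Chord (nat (u mod int n)) k \<in> T}"
    proof (intro subset_antisym subsetI)
      fix k assume "k \<in> {k. Chord (nat (u mod int n)) k \<in> T}"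
      then have "(u, u + int k) \<in> chords" by (simp add: mem_chords)
      then show "k \<in> (\<lambda>d. nat (d - u)) ` {d. (u, d) \<in> chords}" by force
    qed (auto simp: mem_chords)
  qed
  then show ?thesis unfolding chord_count_def by (rule bij_betw_same_card)
qed

lemma finite_chord_ends: "finite {d. (u, d) \<in> chords}"
proof (rule finite_subset)
  show "{d. (u, d) \<in> chords} \<subseteq> {u..u + int n}" using chord_bounds by fastforce
qed simp

sublocale chord_walk m chords "chord_count n T"
  using laminar_chords finite_chord_ends card_chord_ends by unfold_locales

lemma chords_balanced: "\<forall>p\<in>chords. balanced m chords p"
  using balanced_if_chord_faces[OF laminar_chords chord_faces] by blast

lemma walk_above_ray: "r \<in> rays \<Longrightarrow> u < r \<Longrightarrow> W r < W u"
  using walk_above_uncrossed[OF chords_balanced _ ray_uncrossed] by blast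

lemma walk_next_ray:
  assumes "r \<in> rays" "r' \<in> rays" "r < r'" "\<forall>\<rho>\<in>rays. r < \<rho> \<longrightarrow> r' \<le> \<rho>"
  shows "W r' = W r - int m"
  using walk_drop_to_uncrossed[OF chords_balanced _ ray_uncrossed[OF assms(2)], of r]
    gap_faces[OF assms] assms(3) by simp

lemma next_ray: "r \<in> rays \<Longrightarrow> \<exists>r'\<in>rays. r < r' \<and> (\<forall>\<rho>\<in>rays. r < \<rho> \<longrightarrow> r' \<le> \<rho>)"
  using periodic_successor[OF n_pos, of rays] rays_shift[of _ 1] by simp

lemma prev_ray: "\<exists>r\<in>rays. r \<le> u \<and> (\<forall>\<rho>\<in>rays. \<rho> \<le> u \<longrightarrow> \<rho> \<le> r)"
  using periodic_predecessor[OF n_pos _ rays_nonempty] rays_shift by blast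

lemma walk_between_rays:
  "r \<in> rays \<Longrightarrow> q \<in> rays \<Longrightarrow> r \<le> q \<Longrightarrow> W q = W r - int m * int (card {\<rho>\<in>rays. r < \<rho> \<and> \<rho> \<le> q})"
proof (induction "nat (q - r)" arbitrary: r rule: less_induct)
  case less
  show ?case
  proof (cases "r = q")
    case False
    obtain r' where r': "r' \<in> rays" "r < r'" "\<forall>\<rho>\<in>rays. r < \<rho> \<longrightarrow> r' \<le> \<rho>"
      using next_ray[OF less.prems(1)] by blast
    have "r' \<le> q" using r'(3) less.prems False by simp
    then have IH: "W q = W r' - int m * int (card {\<rho>\<in>rays. r' < \<rho> \<and> \<rho> \<le> q})"
      using less.hyps[of r'] r' less.prems(2) by simp
    have "{\<rho>\<in>rays. r < \<rho> \<and> \<rho> \<le> q} = insert r' {\<rho>\<in>rays. r' < \<rho> \<and> \<rho> \<le> q}"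
      using r' \<open>r' \<le> q\<close> by force
    moreover have "finite {\<rho>\<in>rays. r' < \<rho> \<and> \<rho> \<le> q}"
      by (rule finite_subset[of _ "{r'..q}"]) auto
    ultimately have "card {\<rho>\<in>rays. r < \<rho> \<and> \<rho> \<le> q} = card {\<rho>\<in>rays. r' < \<rho> \<and> \<rho> \<le> q} + 1"
      by simp
    then show ?thesis using IH walk_next_ray[OF less.prems(1) r'] by (simp add: algebra_simps)
  qed simp
qed

lemma walk_ray_mod: "r \<in> rays \<Longrightarrow> q \<in> rays \<Longrightarrow> W q mod int m = W r mod int m"
  using walk_between_rays[of r q] walk_between_rays[of q r]
  by (cases "r \<le> q") (simp_all add: mod_diff_right_eq[symmetric])

lemma ray_if_record:
  assumes "q \<in> records W" "r0 \<in> rays" "W q mod int m = W r0 mod int m"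
  shows "q \<in> rays"
proof (rule ccontr)
  assume "q \<notin> rays"
  obtain r where r: "r \<in> rays" "r \<le> q" "\<forall>\<rho>\<in>rays. \<rho> \<le> q \<longrightarrow> \<rho> \<le> r"
    using prev_ray[of q] by blast
  obtain r' where r': "r' \<in> rays" "r < r'" "\<forall>\<rho>\<in>rays. r < \<rho> \<longrightarrow> r' \<le> \<rho>"
    using next_ray[OF r(1)] by blast
  have "r < q" "q < r'" using r r'(1,2) \<open>q \<notin> rays\<close> by (auto simp: not_le[symmetric])
  then have "W r' < W q" "W q < W r"
    using walk_above_ray[OF r'(1)] assms(1) unfolding records_def by auto
  moreover have "W r mod int m = W q mod int m"
    using assms(3) walk_ray_mod[OF assms(2) r(1)] by simp
  then have "int m dvd W r - W q" by (simp only: mod_eq_dvd_iff)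
  ultimately have "int m \<le> W r - W q" by (intro zdvd_imp_le) auto
  then show False using \<open>W r' < W q\<close> walk_next_ray[OF r(1) r'] by simp
qed

lemma chords_subset_walk_chords: "chords \<subseteq> walk_chords m (chord_count n T)"
proof (safe)
  fix c d assume cd: "(c, d) \<in> chords"
  let ?k = "card {d'. (c, d') \<in> chords \<and> d < d'}"
  have "card (insert d {d'. (c, d') \<in> chords \<and> d < d'}) \<le> card {d'. (c, d') \<in> chords}"
    by (rule card_mono[OF finite_chord_ends]) (use cd in auto)
  moreover have "finite {d'. (c, d') \<in> chords \<and> d < d'}"
    using finite_chord_ends[of c] by (rule rev_finite_subset) auto
  ultimately have "?k < chord_count n T c" using card_chord_ends[of c] by simp
  moreover have "W d = W c + int m * int ?k - 1"
    using balanced_iff_walk[OF cd] chords_balanced cd by blast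
  moreover have "c < d" using chord_bounds[OF cd] by simp
  ultimately show "(c, d) \<in> walk_chords m (chord_count n T)"
    unfolding walk_chords_def using walk_above_chord_end[OF chords_balanced cd] by blast
qed

lemma walk_chords_subset_chords: "walk_chords m (chord_count n T) \<subseteq> chords"
proof (safe)
  fix c d assume "(c, d) \<in> walk_chords m (chord_count n T)"
  then obtain k where k: "k < chord_count n T c" "W d = W c + int m * int k - 1"
    and cd: "c < d" and first: "\<forall>u. c < u \<and> u < d \<longrightarrow> W d < W u"
    unfolding walk_chords_def by blast
  let ?E = "{d'. (c, d') \<in> chords}"
  have "k \<in> (\<lambda>x. card {e\<in>?E. x < e}) ` ?E"
    using bij_betw_card_greater[OF finite_chord_ends[of c]] k(1)
    unfolding card_chord_ends bij_betw_def by simp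
  then obtain d' where d': "d' \<in> ?E" "card {e\<in>?E. d' < e} = k" by (auto simp: image_iff)
  have "(c, d') \<in> chords" using d'(1) by simp
  then have "W d' = W d"
    using balanced_iff_walk chords_balanced d'(2) k(2) by auto
  moreover have "c < d'" using chord_bounds \<open>(c, d') \<in> chords\<close> by fastforce
  ultimately have "d' = d"
    using first_hit_unique[OF _ _ cd first] walk_above_chord_end[OF chords_balanced \<open>(c, d') \<in> chords\<close>]
    by blast
  then show "(c, d) \<in> chords" using \<open>(c, d') \<in> chords\<close> by simp
qed

lemma chords_eq_walk_chords: "chords = walk_chords m (chord_count n T)"
  using chords_subset_walk_chords walk_chords_subset_chords by blast

lemma least_spoke_ray: "int (LEAST i. Spoke i \<in> T) \<in> rays"
proof -
  obtain r where "r \<in> rays" using rays_nonempty by blast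
  then have "Spoke (nat (r mod int n)) \<in> T" by (simp add: mem_rays)
  then have "Spoke (LEAST i. Spoke i \<in> T) \<in> T" by (rule LeastI)
  moreover have "(LEAST i. Spoke i \<in> T) < n" using calculation subset_arcs Spoke_in_arcs by blast
  ultimately show ?thesis by (simp add: mem_rays)
qed

lemma rays_eq_walk_rays: "rays = walk_rays m (chord_count n T) (spoke_residue m n T)"
proof (intro set_eqI iffI)
  fix r assume "r \<in> rays"
  then have "r \<in> records W" "W r mod int m = spoke_residue m n T"
    using walk_above_ray walk_ray_mod[OF least_spoke_ray]
    unfolding records_def spoke_residue_def by auto
  then show "r \<in> walk_rays m (chord_count n T) (spoke_residue m n T)" unfolding walk_rays_def by simp
next
  fix r assume "r \<in> walk_rays m (chord_count n T) (spoke_residue m n T)"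
  then show "r \<in> rays"
    using ray_if_record[OF _ least_spoke_ray] unfolding walk_rays_def spoke_residue_def by simp
qed

lemma card_rays_window: "card (rays \<inter> {a..<a + int n}) = num_spokes T"
proof -
  have "card (rays \<inter> {a..<a + int n}) = card (rays \<inter> {0..<int n})"
    by (rule card_periodic_window[OF n_pos]) (simp add: mem_rays)
  also have "rays \<inter> {0..<int n} = int ` {i. Spoke i \<in> T}"
  proof (intro set_eqI iffI)
    fix r assume "r \<in> rays \<inter> {0..<int n}"
    then have "Spoke (nat r) \<in> T" "r = int (nat r)" by (auto simp: mem_rays)
    then show "r \<in> int ` {i. Spoke i \<in> T}" by blast
  next
    fix r assume "r \<in> int ` {i. Spoke i \<in> T}"
    then obtain i where "Spoke i \<in> T" "r = int i" by blast
    moreover from this(1) have "i < n" using subset_arcs Spoke_in_arcs by blast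
    ultimately show "r \<in> rays \<inter> {0..<int n}" by (simp add: mem_rays)
  qed
  finally show ?thesis unfolding num_spokes_def by (simp add: card_image)
qed

lemma period_length: "n = m * ((\<Sum>u\<in>{0..<int n}. chord_count n T u) + num_spokes T)"
proof -
  obtain r where r: "r \<in> rays" using rays_nonempty by blast
  have "{\<rho>\<in>rays. r < \<rho> \<and> \<rho> \<le> r + int n} = rays \<inter> {r + 1..<(r + 1) + int n}" by auto
  then have "W (r + int n) = W r - int m * int (num_spokes T)"
    using walk_between_rays[OF r rays_shift[OF r, of 1]] card_rays_window by simp
  moreover have "W (r + int n) - W r = int m * (\<Sum>u\<in>{r..<r + int n}. int (chord_count n T u)) - int n"
    using walk_diff[of r "r + int n" m] by simp
  moreover have "(\<Sum>u\<in>{r..<r + int n}. int (chord_count n T u)) = (\<Sum>u\<in>{0..<int n}. int (chord_count n T u))"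
    by (rule sum_periodic_window[OF n_pos]) (simp add: chord_count_def)
  ultimately have "int n = int (m * ((\<Sum>u\<in>{0..<int n}. chord_count n T u) + num_spokes T))"
    by (simp add: algebra_simps of_nat_sum)
  then show ?thesis by (simp only: of_nat_eq_iff)
qed

end

section \<open>From a periodic walk to an angulation\<close>

lemma card_residue_block:
  assumes "0 \<le> j" "j < int m"
  shows "card {L. b < L \<and> L \<le> b + int m \<and> L mod int m = j} = 1"
proof -
  have "{L. b < L \<and> L \<le> b + int m \<and> L mod int m = j} = {b + 1 + (j - b - 1) mod int m}"
  proof (intro set_eqI iffI)
    fix L assume L: "L \<in> {L. b < L \<and> L \<le> b + int m \<and> L mod int m = j}"
    then have "(L - b - 1) mod int m = L - b - 1" by (intro mod_pos_pos_trivial) auto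
    moreover have "(L - b - 1) mod int m = (j - b - 1) mod int m"
      using L mod_diff_left_eq[of L "int m" "b + 1"] by (simp add: diff_diff_eq)
    ultimately show "L \<in> {b + 1 + (j - b - 1) mod int m}" by simp
  next
    fix L assume "L \<in> {b + 1 + (j - b - 1) mod int m}"
    moreover have "(b + 1 + (j - b - 1) mod int m) mod int m = j"
      using assms by (simp add: mod_add_right_eq)
    moreover have "0 \<le> (j - b - 1) mod int m" "(j - b - 1) mod int m < int m" using assms by simp_all
    ultimately show "L \<in> {L. b < L \<and> L \<le> b + int m \<and> L mod int m = j}" by auto
  qed
  then show ?thesis by simp
qed

lemma card_residue_interval:
  assumes "0 \<le> j" "j < int m"
  shows "card {L. a < L \<and> L \<le> a + int m * int t \<and> L mod int m = j} = t"
proof (induction t)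
  case (Suc t)
  define b where "b = a + int m * int t"
  have "b \<ge> a" unfolding b_def by simp
  moreover have "a + int m * int (Suc t) = b + int m" unfolding b_def by (simp add: algebra_simps)
  ultimately have "{L. a < L \<and> L \<le> a + int m * int (Suc t) \<and> L mod int m = j}
      = {L. a < L \<and> L \<le> b \<and> L mod int m = j} \<union> {L. b < L \<and> L \<le> b + int m \<and> L mod int m = j}"
    by auto
  moreover have "finite {L. a < L \<and> L \<le> b \<and> L mod int m = j}"
    by (rule finite_subset[of _ "{a..b}"]) auto
  moreover have "{L. a < L \<and> L \<le> b \<and> L mod int m = j} \<inter> {L. b < L \<and> L \<le> b + int m \<and> L mod int m = j} = {}"
    by auto
  moreover have "finite {L. b < L \<and> L \<le> b + int m \<and> L mod int m = j}"
    by (rule card_ge_0_finite) (simp add: card_residue_block[OF assms])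
  ultimately show ?case
    using Suc card_residue_block[OF assms, of b] unfolding b_def by (simp add: card_Un_disjoint)
next
  case 0
  have "{L. a < L \<and> L \<le> a + int m * int 0 \<and> L mod int m = j} = {}" by auto
  then show ?case by (simp only:) simp
qed

definition angulation_of :: "nat \<Rightarrow> nat \<Rightarrow> int \<Rightarrow> (int \<Rightarrow> nat) \<Rightarrow> parc set" where
  "angulation_of m n j A =
     {Spoke i | i. i < n \<and> int i \<in> walk_rays m A j}
     \<union> {Chord i k | i k. i < n \<and> 2 \<le> k \<and> k \<le> n \<and> (int i, int i + int k) \<in> walk_chords m A}"

lemma Spoke_in_angulation_of: "Spoke i \<in> angulation_of m n j A \<longleftrightarrow> i < n \<and> int i \<in> walk_rays m A j"
  unfolding angulation_of_def by auto

lemma Chord_in_angulation_of: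
  "Chord i k \<in> angulation_of m n j A \<longleftrightarrow>
     i < n \<and> 2 \<le> k \<and> k \<le> n \<and> (int i, int i + int k) \<in> walk_chords m A"
  unfolding angulation_of_def by auto

lemma angulation_of_subset_arcs: "angulation_of m n j A \<subseteq> arcs n"
  unfolding angulation_of_def arcs_def by auto

locale periodic_walk =
  fixes m n s K :: nat and A :: "int \<Rightarrow> nat" and j :: int
  assumes m_pos: "0 < m" and s_pos: "0 < s"
    and A_periodic: "\<And>u. A (u mod int n) = A u"
    and sum_A: "(\<Sum>u\<in>{0..<int n}. A u) = K"
    and period_length: "n = m * (K + s)"
    and residue: "0 \<le> j" "j < int m"
begin

abbreviation W :: "int \<Rightarrow> int" where "W \<equiv> walk m A"
abbreviation chords :: "(int \<times> int) set" where "chords \<equiv> walk_chords m A"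
abbreviation rays :: "int set" where "rays \<equiv> walk_rays m A j"

lemma n_pos: "0 < n"
  using period_length m_pos s_pos by simp

lemma ms_pos: "1 \<le> int m * int s"
proof -
  have "1 \<le> int m" "1 \<le> int s" using m_pos s_pos by simp_all
  then show ?thesis using mult_mono[of 1 "int m" 1 "int s"] by simp
qed

lemma walk_period: "W (t + int n) = W t - int m * int s"
proof -
  have "W (t + int n) - W t = int m * (\<Sum>u\<in>{t..<t + int n}. int (A u)) - int n"
    using walk_diff[of t "t + int n" m A] by simp
  also have "(\<Sum>u\<in>{t..<t + int n}. int (A u)) = (\<Sum>u\<in>{0..<int n}. int (A u))"
    by (rule sum_periodic_window[OF n_pos]) (simp add: A_periodic)
  also have "\<dots> = int K" by (simp only: of_nat_sum[symmetric] sum_A)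
  finally have "W (t + int n) - W t = int m * int K - int n" .
  moreover have "int m * int K - int n = - (int m * int s)"
    using period_length by (simp add: algebra_simps)
  ultimately show ?thesis by linarith
qed

lemma walk_periods: "W (t + k * int n) = W t - k * int m * int s"
proof -
  have nat_periods: "W (t + int k * int n) = W t - int k * int m * int s" for t k
  proof (induction k)
    case (Suc k)
    then show ?case using walk_period[of "t + int k * int n"] by (simp add: algebra_simps)
  qed simp
  show ?thesis
  proof (cases "0 \<le> k")
    case True
    then show ?thesis using nat_periods[of t "nat k"] by simp
  next
    case False
    then show ?thesis using nat_periods[of "t + k * int n" "nat (- k)"] by simp
  qed
qed

lemma A_periods: "A (t + k * int n) = A t"
  using A_periodic[of "t + k * int n"] A_periodic[of t] by simp

lemma walk_hits:
  assumes "L \<le> W x"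
  shows "\<exists>t\<ge>x. W t = L \<and> (\<forall>u. x \<le> u \<and> u < t \<longrightarrow> L < W u)"
proof (rule first_hit_exists[OF walk_succ_ge assms])
  let ?k = "W x - L"
  have "0 \<le> ?k" using assms by simp
  then have "?k \<le> ?k * (int m * int s)" using ms_pos mult_left_mono[of 1 _ ?k] by simp
  then show "W (x + ?k * int n) \<le> L" using walk_periods[of x ?k] unfolding mult.assoc by linarith
  show "x \<le> x + ?k * int n" using \<open>0 \<le> ?k\<close> by simp
qed

lemma walk_far_left: "\<exists>x. \<forall>u\<le>x. L < W u"
proof -
  define M where "M = Min (W ` {0..<int n})"
  define k where "k = int (nat (L - M)) + 1"
  have "L < W u" if "u \<le> - k * int n" for u
  proof -
    let ?q = "u div int n"
    have "W u = W (u mod int n) - ?q * (int m * int s)"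
      using walk_periods[of "u mod int n" ?q] by (simp add: mult.assoc)
    moreover have "M \<le> W (u mod int n)"
      unfolding M_def using n_pos by (intro Min_le) auto
    moreover have "?q * int n \<le> (- k) * int n"
      using that n_pos minus_mod_eq_div_mult[of u "int n"] pos_mod_sign[of "int n" u] by linarith
    then have "k \<le> - ?q" using n_pos mult_le_cancel_right_pos[of "int n" ?q "- k"] by simp
    then have "k * (int m * int s) \<le> - ?q * (int m * int s)"
      using ms_pos by (intro mult_right_mono) auto
    moreover have "k \<le> k * (int m * int s)"
      using ms_pos mult_left_mono[of 1 "int m * int s" k] unfolding k_def by simp
    ultimately show ?thesis unfolding k_def by linarith
  qed
  then show ?thesis by blast
qed

lemma records_exist: "\<exists>t\<in>records W. W t = L"
proof -
  obtain x where left: "\<forall>u\<le>x. L < W u" using walk_far_left by blast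
  then have "L \<le> W x" using less_imp_le by blast
  then obtain t where t: "x \<le> t" "W t = L" "\<forall>u. x \<le> u \<and> u < t \<longrightarrow> L < W u"
    using walk_hits by blast
  have "t \<in> records W"
  proof (unfold records_def, intro CollectI allI impI)
    fix u assume "u < t"
    then show "W t < W u" using left t by (cases "u \<le> x") auto
  qed
  then show ?thesis using t(2) by blast
qed

lemma bij_betw_records_levels: "bij_betw W {q \<in> records W. P (W q)} {L. P L}"
proof (rule bij_betw_imageI)
  show "inj_on W {q \<in> records W. P (W q)}" by (rule inj_onI) (auto intro: records_inj)
  show "W ` {q \<in> records W. P (W q)} = {L. P L}"
  proof (intro subset_antisym subsetI)
    fix L assume "L \<in> {L. P L}"
    moreover obtain q where "q \<in> records W" "W q = L" using records_exist by blast
    ultimately show "L \<in> W ` {q \<in> records W. P (W q)}" by blast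
  qed auto
qed

lemma records_periods:
  assumes "r \<in> records W"
  shows "r + k * int n \<in> records W"
proof (unfold records_def, intro CollectI allI impI)
  fix u assume "u < r + k * int n"
  then have "W r < W (u - k * int n)" using assms unfolding records_def by simp
  then show "W (r + k * int n) < W u"
    using walk_periods[of r k] walk_periods[of "u - k * int n" k] by simp
qed

lemma mem_rays: "r \<in> rays \<longleftrightarrow> r \<in> records W \<and> W r mod int m = j"
  unfolding walk_rays_def by simp

lemma rays_periods:
  assumes "r \<in> rays"
  shows "r + k * int n \<in> rays"
proof -
  have "W (r + k * int n) = W r + (- (k * int s)) * int m"
    using walk_periods[of r k] by (simp add: algebra_simps)
  then have "W (r + k * int n) mod int m = W r mod int m" by (simp only: mod_mult_self1)
  then show ?thesis using assms records_periods unfolding mem_rays by simp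
qed

lemma rays_mod: "r mod int n \<in> rays \<longleftrightarrow> r \<in> rays"
  using rays_periods[of r "- (r div int n)"] rays_periods[of "r mod int n" "r div int n"]
  by (auto simp: minus_div_mult_eq_mod[symmetric] algebra_simps)

lemma rays_nonempty: "rays \<noteq> {}"
proof -
  obtain q where "q \<in> records W" "W q = j" using records_exist by blast
  then have "q \<in> rays" using residue by (simp add: mem_rays)
  then show ?thesis by blast
qed

lemma card_rays_window:
  assumes r0: "r0 \<in> rays"
  shows "card (rays \<inter> {r0..<r0 + int n}) = s"
proof -
  let ?a = "W r0 - int m * int s"
  have r0n: "r0 + int n \<in> records W" using records_periods[of r0 1] r0 by (simp add: mem_rays)
  have "rays \<inter> {r0..<r0 + int n} = {q \<in> records W. ?a < W q \<and> W q \<le> ?a + int m * int s \<and> W q mod int m = j}"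
  proof -
    have "r0 \<le> q \<longleftrightarrow> W q \<le> W r0" "q < r0 + int n \<longleftrightarrow> ?a < W q" if "q \<in> records W" for q
      using records_less_iff[OF that, of r0] records_less_iff[OF that r0n] r0 walk_period[of r0]
      by (auto simp: mem_rays not_less[symmetric])
    then show ?thesis by (auto simp: walk_rays_def)
  qed
  then have "card (rays \<inter> {r0..<r0 + int n})
      = card {L. ?a < L \<and> L \<le> ?a + int m * int s \<and> L mod int m = j}"
    using bij_betw_records_levels bij_betw_same_card by fastforce
  also have "\<dots> = s" using card_residue_interval[OF residue] .
  finally show ?thesis .
qed

lemma card_rays_period: "card (rays \<inter> {0..<int n}) = s"
proof -
  obtain r0 where r0: "r0 \<in> rays" using rays_nonempty by blast
  have "card (rays \<inter> {r0..<r0 + int n}) = card (rays \<inter> {0..<int n})"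
    by (rule card_periodic_window[OF n_pos]) (rule rays_mod)
  then show ?thesis using card_rays_window[OF r0] by simp
qed

definition level :: "int \<Rightarrow> int \<Rightarrow> nat" where
  "level c d = nat ((W d - W c + 1) div int m)"

lemma level_eq: "W d = W c + int m * int k - 1 \<Longrightarrow> level c d = k"
  unfolding level_def using m_pos by simp

lemma mem_chordsD:
  assumes "(c, d) \<in> chords"
  shows "c < d" "level c d < A c" "W d = W c + int m * int (level c d) - 1"
    and "\<forall>u. c < u \<and> u < d \<longrightarrow> W d < W u"
  using assms level_eq unfolding walk_chords_def by auto

lemma walk_chord_end_ge:
  assumes "(c, d) \<in> chords"
  shows "W c - 1 \<le> W d"
proof -
  have "0 \<le> int m * int (level c d)" by simp
  then show ?thesis using mem_chordsD(3)[OF assms] by linarith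
qed

lemma chord_exists:
  assumes "k < A c"
  shows "\<exists>d. (c, d) \<in> chords \<and> level c d = k"
proof -
  let ?L = "W c + int m * int k - 1"
  have "?L < W (c + 1)" using assms walk_succ[of m A c] m_pos by simp
  then obtain t where t: "c + 1 \<le> t" "W t = ?L" "\<forall>u. c + 1 \<le> u \<and> u < t \<longrightarrow> ?L < W u"
    using walk_hits[of ?L "c + 1"] by auto
  then have "(c, t) \<in> chords" using assms unfolding walk_chords_def by auto
  then show ?thesis using level_eq[OF t(2)] by blast
qed

lemma chords_periods:
  assumes "(c, d) \<in> chords"
  shows "(c + k * int n, d + k * int n) \<in> chords"
proof -
  have "W (d + k * int n) < W u" if "c + k * int n < u" "u < d + k * int n" for u
    using mem_chordsD(4)[OF assms, rule_format, of "u - k * int n"] that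
      walk_periods[of d k] walk_periods[of "u - k * int n" k] by simp
  then show ?thesis
    using mem_chordsD(1-3)[OF assms] walk_periods[of c k] walk_periods[of d k] A_periods[of c k]
    unfolding walk_chords_def by auto
qed

lemma chord_bounds:
  assumes "(c, d) \<in> chords"
  shows "c + 2 \<le> d \<and> d \<le> c + int n"
proof -
  note cd = mem_chordsD[OF assms]
  have "d \<noteq> c + 1"
  proof
    assume "d = c + 1"
    then have "int m * int (A c) = int m * int (level c d)" using cd(3) walk_succ[of m A c] by simp
    then show False using cd(2) m_pos by simp
  qed
  moreover have "d \<le> c + int n"
  proof (rule ccontr)
    assume "\<not> d \<le> c + int n"
    then have "W d < W (c + int n)" using cd(4) n_pos by simp
    then show False using walk_chord_end_ge[OF assms] walk_period[of c] ms_pos by simp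
  qed
  ultimately show ?thesis using cd(1) by simp
qed

lemma chords_noncrossing:
  assumes "(a, b) \<in> chords" "(c, d) \<in> chords"
  shows "\<not> (a < c \<and> c < b \<and> b < d)"
  using mem_chordsD(4)[OF assms(1)] mem_chordsD(4)[OF assms(2)] walk_chord_end_ge[OF assms(2)]
  by force

lemma record_uncrossed:
  assumes "r \<in> records W"
  shows "\<forall>(a, b)\<in>chords. \<not> (a < r \<and> r < b)"
  using assms mem_chordsD(4) walk_chord_end_ge unfolding records_def by fastforce

lemma laminar_chords: "laminar chords"
  unfolding laminar_def using chords_noncrossing chord_bounds by fastforce

lemma bij_betw_level: "bij_betw (level c) {d. (c, d) \<in> chords} {0..<A c}"
proof (rule bij_betw_imageI)
  show "inj_on (level c) {d. (c, d) \<in> chords}"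
  proof (rule inj_onI)
    fix d1 d2 assume "d1 \<in> {d. (c, d) \<in> chords}" "d2 \<in> {d. (c, d) \<in> chords}" "level c d1 = level c d2"
    then show "d1 = d2"
      using mem_chordsD[of c d1] mem_chordsD[of c d2] first_hit_unique[of c d1 W d2] by auto
  qed
  show "level c ` {d. (c, d) \<in> chords} = {0..<A c}"
    using mem_chordsD(2) chord_exists by fastforce
qed

lemma card_chord_ends: "card {d. (c, d) \<in> chords} = A c"
  using bij_betw_same_card[OF bij_betw_level] by simp

lemma finite_chord_ends: "finite {d. (c, d) \<in> chords}"
proof (rule finite_subset)
  show "{d. (c, d) \<in> chords} \<subseteq> {c..c + int n}" using chord_bounds by fastforce
qed simp

sublocale chord_walk m chords A
  using laminar_chords finite_chord_ends card_chord_ends by unfold_locales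

lemma level_less_iff:
  assumes "(c, d) \<in> chords" "(c, d') \<in> chords"
  shows "d < d' \<longleftrightarrow> level c d' < level c d"
proof -
  have "level c d' < level c d \<longleftrightarrow> W d' < W d"
    using mem_chordsD(3)[OF assms(1)] mem_chordsD(3)[OF assms(2)] m_pos by simp
  moreover have "d < d' \<longleftrightarrow> W d' < W d"
    using mem_chordsD(1,4)[OF assms(1)] mem_chordsD(1,4)[OF assms(2)]
    by (cases d d' rule: linorder_cases) auto
  ultimately show ?thesis by simp
qed

lemma card_longer_chords:
  assumes "(c, d) \<in> chords"
  shows "card {d'. (c, d') \<in> chords \<and> d < d'} = level c d"
proof -
  have "bij_betw (level c) {d' \<in> {d. (c, d) \<in> chords}. d < d'} {k \<in> {0..<A c}. k < level c d}"
    using level_less_iff[OF assms] by (intro bij_betw_Collect[OF bij_betw_level]) simp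
  moreover have "{k \<in> {0..<A c}. k < level c d} = {0..<level c d}"
    using mem_chordsD(2)[OF assms] by auto
  ultimately show ?thesis by (simp add: bij_betw_same_card)
qed

lemma chords_balanced: "\<forall>p\<in>chords. balanced m chords p"
  using balanced_iff_walk card_longer_chords mem_chordsD(3) by auto

lemma walk_next_ray:
  assumes "r \<in> rays" "r' \<in> rays" "r < r'" "\<not> (\<exists>r''\<in>rays. r < r'' \<and> r'' < r')"
  shows "W r' = W r - int m"
proof -
  have r: "r \<in> records W" "W r mod int m = j" and r': "r' \<in> records W" "W r' mod int m = j"
    using assms(1,2) by (simp_all add: mem_rays)
  obtain q where q: "q \<in> records W" "W q = W r - int m" using records_exist by blast
  then have "q \<in> rays" using r by (simp add: mem_rays mod_diff_right_eq[symmetric])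
  moreover have "r < q" using records_less_iff[OF r(1) q(1)] q(2) m_pos by simp
  ultimately have "r' \<le> q" using assms(4) by force
  moreover have "\<not> r' < q"
  proof
    assume "r' < q"
    then have "W q < W r'" "W r' < W r"
      using records_less_iff[OF r'(1) q(1)] records_less_iff[OF r(1) r'(1)] assms(3) by simp_all
    moreover have "W r mod int m = W r' mod int m" using r(2) r'(2) by simp
    then have "int m dvd W r - W r'" by (simp only: mod_eq_dvd_iff)
    ultimately show False using q(2) zdvd_imp_le[of "int m" "W r - W r'"] by simp
  qed
  ultimately show ?thesis using q(2) by simp
qed

lemma chords_mod:
  "(a, b) \<in> chords \<longleftrightarrow>
     a \<le> b \<and> 2 \<le> b - a \<and> b - a \<le> int n \<and> (a mod int n, a mod int n + (b - a)) \<in> chords"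
proof
  assume ab: "(a, b) \<in> chords"
  have "a + (- (a div int n)) * int n = a mod int n"
    and "b + (- (a div int n)) * int n = a mod int n + (b - a)"
    by (simp_all add: minus_div_mult_eq_mod[symmetric] algebra_simps)
  then have "(a mod int n, a mod int n + (b - a)) \<in> chords"
    using chords_periods[OF ab, of "- (a div int n)"] by (simp only:)
  then show "a \<le> b \<and> 2 \<le> b - a \<and> b - a \<le> int n \<and> (a mod int n, a mod int n + (b - a)) \<in> chords"
    using chord_bounds[OF ab] by simp
next
  assume "a \<le> b \<and> 2 \<le> b - a \<and> b - a \<le> int n \<and> (a mod int n, a mod int n + (b - a)) \<in> chords"
  then have "(a mod int n + (a div int n) * int n, a mod int n + (b - a) + (a div int n) * int n) \<in> chords"
    using chords_periods by blast
  then show "(a, b) \<in> chords" by (simp add: algebra_simps)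
qed

lemma lift_chords_angulation_of: "lift_chords n (angulation_of m n j A) = chords"
proof (intro set_eqI)
  fix p :: "int \<times> int"
  obtain a b where p: "p = (a, b)" by (cases p)
  have "0 \<le> a mod int n" "a mod int n < int n" using n_pos by simp_all
  then show "p \<in> lift_chords n (angulation_of m n j A) \<longleftrightarrow> p \<in> chords"
    unfolding p mem_lift_chords[OF angulation_of_subset_arcs n_pos] Chord_in_angulation_of
    using chords_mod[of a b] by (auto simp: nat_less_iff le_nat_iff)
qed

lemma lift_rays_angulation_of: "lift_rays n (angulation_of m n j A) = rays"
proof (intro set_eqI)
  fix r
  have "0 \<le> r mod int n" "r mod int n < int n" using n_pos by simp_all
  then show "r \<in> lift_rays n (angulation_of m n j A) \<longleftrightarrow> r \<in> rays"
    unfolding mem_lift_rays[OF angulation_of_subset_arcs n_pos] Spoke_in_angulation_of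
    using rays_mod[of r] by (auto simp: nat_less_iff)
qed

lemma is_angulation_angulation_of: "is_angulation m n (angulation_of m n j A)"
proof -
  have noncrossing: "noncrossing n (angulation_of m n j A)"
    unfolding noncrossing_def lift_chords_angulation_of lift_rays_angulation_of
    using chords_noncrossing record_uncrossed by (fastforce simp: mem_rays)
  have faces: "\<forall>(a, b)\<in>chords. 1 + pieces (chords - {(a, b)}) a b = m + 2"
  proof (intro ballI, clarify)
    fix a b assume "(a, b) \<in> chords"
    then show "1 + pieces (chords - {(a, b)}) a b = m + 2"
      using chord_face_iff_balanced[OF laminar_chords] chords_balanced by (simp add: mem_within)
  qed
  have gaps: "\<forall>r\<in>rays. \<forall>r'\<in>rays. r < r' \<and> \<not> (\<exists>r''\<in>rays. r < r'' \<and> r'' < r') \<longrightarrow>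
                2 + pieces chords r r' = m + 2"
  proof (intro ballI impI)
    fix r r' assume r: "r \<in> rays" "r' \<in> rays"
      and gap: "r < r' \<and> \<not> (\<exists>r''\<in>rays. r < r'' \<and> r'' < r')"
    have "r' \<in> records W" using r(2) by (simp add: mem_rays)
    then show "2 + pieces chords r r' = m + 2"
      using walk_drop_to_uncrossed[OF chords_balanced _ record_uncrossed, of r r']
        walk_next_ray[OF r] gap by simp
  qed
  show ?thesis
    unfolding is_angulation_def lift_chords_angulation_of lift_rays_angulation_of
    by (intro conjI angulation_of_subset_arcs noncrossing rays_nonempty faces gaps)
qed

lemma num_spokes_angulation_of: "num_spokes (angulation_of m n j A) = s"
proof -
  have "{i. Spoke i \<in> angulation_of m n j A} = nat ` (rays \<inter> {0..<int n})"
  proof (intro set_eqI iffI)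
    fix i assume "i \<in> {i. Spoke i \<in> angulation_of m n j A}"
    then have "int i \<in> rays \<inter> {0..<int n}" by (simp add: Spoke_in_angulation_of)
    then show "i \<in> nat ` (rays \<inter> {0..<int n})" by (metis image_eqI nat_int)
  qed (auto simp: Spoke_in_angulation_of nat_less_iff)
  moreover have "inj_on nat (rays \<inter> {0..<int n})" by (rule inj_onI) auto
  ultimately show ?thesis
    unfolding num_spokes_def using card_rays_period by (simp add: card_image)
qed

sublocale angulation_of: lifted_angulation m n "angulation_of m n j A"
  using m_pos is_angulation_angulation_of by unfold_locales

lemma chord_count_angulation_of: "chord_count n (angulation_of m n j A) = A"
proof
  fix u
  show "chord_count n (angulation_of m n j A) u = A u"
    using angulation_of.card_chord_ends[of u] card_chord_ends[of u]
    unfolding lift_chords_angulation_of by simp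
qed

lemma spoke_residue_angulation_of: "spoke_residue m n (angulation_of m n j A) = j"
proof -
  obtain r where r: "r \<in> rays" using rays_nonempty by blast
  then have "r \<in> walk_rays m A (spoke_residue m n (angulation_of m n j A))"
    using angulation_of.rays_eq_walk_rays
    unfolding lift_rays_angulation_of chord_count_angulation_of by simp
  then show ?thesis using r unfolding walk_rays_def by simp
qed

end

section \<open>Counting angulations\<close>

context lifted_angulation
begin

lemma Spoke_in_iff: "Spoke i \<in> T \<longleftrightarrow> i < n \<and> int i \<in> rays"
proof
  assume "Spoke i \<in> T"
  moreover from this have "i < n" using subset_arcs Spoke_in_arcs by blast
  ultimately show "i < n \<and> int i \<in> rays" by (simp add: mem_rays)
next
  assume "i < n \<and> int i \<in> rays"
  then show "Spoke i \<in> T" by (auto simp: mem_rays simp flip: of_nat_mod)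
qed

lemma Chord_in_iff: "Chord i k \<in> T \<longleftrightarrow> i < n \<and> 2 \<le> k \<and> k \<le> n \<and> (int i, int i + int k) \<in> chords"
proof
  assume "Chord i k \<in> T"
  moreover from this have "i < n \<and> 2 \<le> k \<and> k \<le> n" using subset_arcs Chord_in_arcs by blast
  ultimately show "i < n \<and> 2 \<le> k \<and> k \<le> n \<and> (int i, int i + int k) \<in> chords"
    by (simp add: mem_chords)
next
  assume "i < n \<and> 2 \<le> k \<and> k \<le> n \<and> (int i, int i + int k) \<in> chords"
  then show "Chord i k \<in> T" by (auto simp: mem_chords simp flip: of_nat_mod)
qed

lemma angulation_of_spoke_residue: "angulation_of m n (spoke_residue m n T) (chord_count n T) = T"
proof (intro set_eqI)
  fix a show "a \<in> angulation_of m n (spoke_residue m n T) (chord_count n T) \<longleftrightarrow> a \<in> T"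
    by (cases a) (simp_all add: Spoke_in_iff Chord_in_iff Spoke_in_angulation_of
        Chord_in_angulation_of chords_eq_walk_chords rays_eq_walk_rays)
qed

end

definition cyclic_nth :: "nat list \<Rightarrow> int \<Rightarrow> nat" where
  "cyclic_nth xs u = xs ! nat (u mod int (length xs))"

definition angulation_code :: "nat \<Rightarrow> nat \<Rightarrow> parc set \<Rightarrow> int \<times> nat list" where
  "angulation_code m n T = (spoke_residue m n T, map (\<lambda>i. chord_count n T (int i)) [0..<n])"

definition angulation_decode :: "nat \<Rightarrow> nat \<Rightarrow> int \<times> nat list \<Rightarrow> parc set" where
  "angulation_decode m n p = angulation_of m n (fst p) (cyclic_nth (snd p))"

lemma sum_int_atLeastLessThan: "(\<Sum>u\<in>{0..<int n}. f u) = (\<Sum>i<n. f (int i))"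
proof -
  have "{0..<int n} = int ` {..<n}" by (simp add: atLeast0LessThan[symmetric] image_int_atLeastLessThan)
  then show ?thesis by (simp add: sum.reindex)
qed

lemma cyclic_nth_map:
  assumes "0 < n" "\<And>u. f (u mod int n) = f u"
  shows "cyclic_nth (map (\<lambda>i. f (int i)) [0..<n]) = f"
proof
  fix u
  have "0 \<le> u mod int n" "u mod int n < int n" using assms(1) by simp_all
  then show "cyclic_nth (map (\<lambda>i. f (int i)) [0..<n]) u = f u"
    unfolding cyclic_nth_def using assms(2) by (simp add: nat_less_iff)
qed

lemma map_cyclic_nth: "map (\<lambda>i. cyclic_nth xs (int i)) [0..<length xs] = xs"
  by (rule nth_equalityI) (simp_all add: cyclic_nth_def)

lemma (in lifted_angulation) angulation_decode_code: "angulation_decode m n (angulation_code m n T) = T"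
  unfolding angulation_decode_def angulation_code_def
  using angulation_of_spoke_residue cyclic_nth_map[OF n_pos, of "chord_count n T"]
  by (simp add: chord_count_def)

lemma (in lifted_angulation) angulation_code_mem:
  assumes "n = m * (K + num_spokes T)"
  shows "angulation_code m n T \<in> {0..<int m} \<times> {xs. length xs = n \<and> sum_list xs = K}"
proof -
  have "m * ((\<Sum>u\<in>{0..<int n}. chord_count n T u) + num_spokes T) = m * (K + num_spokes T)"
    using trans[OF period_length[symmetric] assms] .
  then have "(\<Sum>i<n. chord_count n T (int i)) = K"
    using m_pos unfolding sum_int_atLeastLessThan by simp
  then show ?thesis
    unfolding angulation_code_def spoke_residue_def using m_pos
    by (simp add: sum_list_sum_nth atLeast0LessThan)
qed

lemma periodic_walk_cyclic_nth:
  assumes "0 < m" "0 < s" "n = m * (K + s)" "0 \<le> j" "j < int m" "length xs = n" "sum_list xs = K"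
  shows "periodic_walk m n s K (cyclic_nth xs) j"
proof
  show "(\<Sum>u\<in>{0..<int n}. cyclic_nth xs u) = K"
    using assms(6,7) by (simp add: sum_int_atLeastLessThan cyclic_nth_def sum_list_sum_nth atLeast0LessThan)
qed (use assms in \<open>simp_all add: cyclic_nth_def\<close>)

lemma bij_betw_angulation_code:
  assumes "0 < m" "0 < s" "n = m * (K + s)"
  shows "bij_betw (angulation_code m n) {T. is_angulation m n T \<and> num_spokes T = s}
           ({0..<int m} \<times> {xs. length xs = n \<and> sum_list xs = K})"
proof (rule bij_betw_byWitness[where f' = "angulation_decode m n"])
  have angulation: "lifted_angulation m n T" if "is_angulation m n T" for T
    using assms(1) that by unfold_locales
  show "\<forall>T\<in>{T. is_angulation m n T \<and> num_spokes T = s}. angulation_decode m n (angulation_code m n T) = T"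
    using lifted_angulation.angulation_decode_code[OF angulation] by blast
  show "angulation_code m n ` {T. is_angulation m n T \<and> num_spokes T = s}
          \<subseteq> {0..<int m} \<times> {xs. length xs = n \<and> sum_list xs = K}"
    using lifted_angulation.angulation_code_mem[OF angulation] assms(3) by blast
  have walk: "periodic_walk m n s K (cyclic_nth (snd p)) (fst p)"
    if "p \<in> {0..<int m} \<times> {xs. length xs = n \<and> sum_list xs = K}" for p
    using that assms by (intro periodic_walk_cyclic_nth) auto
  show "\<forall>p\<in>{0..<int m} \<times> {xs. length xs = n \<and> sum_list xs = K}.
          angulation_code m n (angulation_decode m n p) = p"
    using periodic_walk.chord_count_angulation_of[OF walk] periodic_walk.spoke_residue_angulation_of[OF walk]
      map_cyclic_nth
    by (auto simp: angulation_code_def angulation_decode_def)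
  show "angulation_decode m n ` ({0..<int m} \<times> {xs. length xs = n \<and> sum_list xs = K})
          \<subseteq> {T. is_angulation m n T \<and> num_spokes T = s}"
    using periodic_walk.is_angulation_angulation_of[OF walk] periodic_walk.num_spokes_angulation_of[OF walk]
    by (auto simp: angulation_decode_def)
qed

theorem theorem3p4:
  fixes m l n s :: nat
  assumes "m \<ge> 1" and "l \<ge> 1" and "n = m * l" and "1 \<le> s" and "s \<le> l"
  shows "card {T. T \<subseteq> arcs n \<and> is_angulation m n T \<and> num_spokes T = s}
           = m * ((n + l - s - 1) choose (n - 1))"
proof -
  define K where "K = l - s"
  have n: "n = m * (K + s)" "1 \<le> n" unfolding K_def using assms by simp_all
  have "{T. T \<subseteq> arcs n \<and> is_angulation m n T \<and> num_spokes T = s}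
      = {T. is_angulation m n T \<and> num_spokes T = s}"
    by (auto simp: is_angulation_def)
  then have "card {T. T \<subseteq> arcs n \<and> is_angulation m n T \<and> num_spokes T = s}
      = card ({0..<int m} \<times> {xs. length xs = n \<and> sum_list xs = K})"
    using bij_betw_angulation_code[of m s n K] assms n(1) bij_betw_same_card by fastforce
  also have "\<dots> = m * ((K + n - 1) choose K)"
    by (simp add: card_cartesian_product card_length_sum_list)
  also have "(K + n - 1) choose K = (n + l - s - 1) choose (n - 1)"
    using binomial_symmetric[of K "K + n - 1"] n(2) assms(5) unfolding K_def by (simp add: ac_simps)
  finally show ?thesis .
qed

end
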